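(* For every $n\geq 1$, $M\geq 2$ and $\Upsilon>0$, $$\epsilon_{\mathrm{m}}^{\star}(n,M,\Upsilon)\;\geq\;\epsilon_{\mathrm{e}}^{\star}\Bigl(n+1,M,\tfrac{n\Upsilon}{n+1}\Bigr).$$
   Context: AWGN channel with noise variance $\sigma^2>0$: for input $\mathbf{x}\in\mathbb{R}^n$ the output $\mathbf{y}\in\mathbb{R}^n$ has density $w(\mathbf{y}|\mathbf{x})=\prod_{i=1}^n\varphi_{x_i,\sigma}(y_i)$, where $\varphi_{\mu,\sigma}(y)=\frac{1}{\sqrt{2\pi}\sigma}e^{-(y-\mu)^2/(2\sigma^2)}$. A codebook is $\mathcal{C}=\{\mathbf{c}_1,\dots,\mathbf{c}_M\}\subset\mathbb{R}^n$; a message $V$ uniform on $\{1,\dots,M\}$ is sent as $\mathbf{c}_V$, and the receiver uses maximum-likelihood decoding to produce $\hat V$; $P_e(\mathcal{C})=\Pr\{\hat V\neq V\}$ is the average error probability. Power-constrained families: $\mathcal{F}_{\mathrm{e}}(n,M,\Upsilon)=\{\mathcal{C}:\|\mathbf{c}_i\|^2=n\Upsilon\ \forall i\}$ (equal), $\mathcal{F}_{\mathrm{m}}(n,M,\Upsilon)=\{\mathcal{C}:\|\mathbf{c}_i\|^2\le n\Upsilon\ \forall i\}$ (maximal), $\mathcal{F}_{\mathrm{a}}(n,M,\Upsilon)=\{\mathcal{C}:\frac1M\sum_i\|\mathbf{c}_i\|^2\le n\Upsilon\}$ (average). For $i\in\{\mathrm{e},\mathrm{m},\mathrm{a}\}$,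 $\epsilon_i^{\star}(n,M,\Upsilon)=\inf_{\mathcal{C}\in\mathcal{F}_i(n,M,\Upsilon)}P_e(\mathcal{C})$ (with $\sigma^2$ fixed). *)

theory Defs
  imports "HOL-Analysis.Analysis"
begin

text \<open>Vectors in R^n are represented as functions nat => real, only the coordinates
  i < n being relevant; a codebook of size M is a function c :: nat => (nat => real),
  where c v (v < M) is the codeword of message v (messages indexed 0..M-1).\<close>

definition gauss_pdf :: "real \<Rightarrow> real \<Rightarrow> real \<Rightarrow> real" where
  "gauss_pdf \<mu> \<sigma> y = exp (- ((y - \<mu>)^2) / (2 * \<sigma>^2)) / (sqrt (2 * pi) * \<sigma>)"

definition awgn_density :: "real \<Rightarrow> nat \<Rightarrow> (nat \<Rightarrow> real) \<Rightarrow> (nat \<Rightarrow> real) \<Rightarrow> real" where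
  "awgn_density \<sigma> n x y = (\<Prod>i<n. gauss_pdf (x i) \<sigma> (y i))"

definition ml_decoder :: "real \<Rightarrow> nat \<Rightarrow> nat \<Rightarrow> (nat \<Rightarrow> nat \<Rightarrow> real) \<Rightarrow> (nat \<Rightarrow> real) \<Rightarrow> nat" where
  "ml_decoder \<sigma> n M c y =
     (LEAST v. v < M \<and> (\<forall>u<M. awgn_density \<sigma> n (c u) y \<le> awgn_density \<sigma> n (c v) y))"

definition error_prob :: "real \<Rightarrow> nat \<Rightarrow> nat \<Rightarrow> (nat \<Rightarrow> nat \<Rightarrow> real) \<Rightarrow> real" where
  "error_prob \<sigma> n M c =
     (\<Sum>v<M. LINT y | PiM {..<n} (\<lambda>_. lborel).
        (if ml_decoder \<sigma> n M c y \<noteq> v then 1 else 0) * awgn_density \<sigma> n (c v) y) / real M"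

definition sqnorm :: "nat \<Rightarrow> (nat \<Rightarrow> real) \<Rightarrow> real" where
  "sqnorm n x = (\<Sum>i<n. (x i)^2)"

definition equal_power_codes :: "nat \<Rightarrow> nat \<Rightarrow> real \<Rightarrow> (nat \<Rightarrow> nat \<Rightarrow> real) set" where
  "equal_power_codes n M \<Upsilon> = {c. \<forall>v<M. sqnorm n (c v) = real n * \<Upsilon>}"

definition max_power_codes :: "nat \<Rightarrow> nat \<Rightarrow> real \<Rightarrow> (nat \<Rightarrow> nat \<Rightarrow> real) set" where
  "max_power_codes n M \<Upsilon> = {c. \<forall>v<M. sqnorm n (c v) \<le> real n * \<Upsilon>}"

definition avg_power_codes :: "nat \<Rightarrow> nat \<Rightarrow> real \<Rightarrow> (nat \<Rightarrow> nat \<Rightarrow> real) set" where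
  "avg_power_codes n M \<Upsilon> = {c. (\<Sum>v<M. sqnorm n (c v)) / real M \<le> real n * \<Upsilon>}"

definition eps_e :: "real \<Rightarrow> nat \<Rightarrow> nat \<Rightarrow> real \<Rightarrow> real" where
  "eps_e \<sigma> n M \<Upsilon> = (INF c \<in> equal_power_codes n M \<Upsilon>. error_prob \<sigma> n M c)"

definition eps_m :: "real \<Rightarrow> nat \<Rightarrow> nat \<Rightarrow> real \<Rightarrow> real" where
  "eps_m \<sigma> n M \<Upsilon> = (INF c \<in> max_power_codes n M \<Upsilon>. error_prob \<sigma> n M c)"

definition eps_a :: "real \<Rightarrow> nat \<Rightarrow> nat \<Rightarrow> real \<Rightarrow> real" where
  "eps_a \<sigma> n M \<Upsilon> = (INF c \<in> avg_power_codes n M \<Upsilon>. error_prob \<sigma> n M c)"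

end

theory Submission imports Defs "HOL-Probability.Distributions" begin

text \<open>Padding every codeword of a code with maximal power n\<Upsilon> by one extra coordinate
  \<open>sqrt (n\<Upsilon> - \<parallel>c\<^sub>v\<parallel>\<^sup>2)\<close> yields a code of length n + 1 in which all codewords have power
  exactly n\<Upsilon>. Its error probability is no larger: the ML decoder on n + 1 coordinates
  maximises the likelihood of the decision pointwise, so it does at least as well as the
  decoder that ignores the extra coordinate and applies the original ML rule, and the latter
  has exactly the original error probability because the extra Gaussian factor integrates
  to 1.\<close>

abbreviation PiM_lborel :: "nat \<Rightarrow> (nat \<Rightarrow> real) measure" where
  "PiM_lborel m \<equiv> PiM {..<m} (\<lambda>_. lborel)"

lemma gauss_pdf_eq_normal_density: "\<sigma> > 0 \<Longrightarrow> gauss_pdf \<mu> \<sigma> y = normal_density \<mu> \<sigma> y"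
  unfolding gauss_pdf_def normal_density_def by (simp add: real_sqrt_mult)

lemma gauss_pdf_nonneg: "\<sigma> > 0 \<Longrightarrow> gauss_pdf \<mu> \<sigma> y \<ge> 0"
  by (simp add: gauss_pdf_eq_normal_density)

lemma borel_measurable_gauss_pdf[measurable]: "gauss_pdf \<mu> \<sigma> \<in> borel_measurable borel"
  unfolding gauss_pdf_def[abs_def] by measurable

lemma nn_integral_gauss_pdf: "\<sigma> > 0 \<Longrightarrow> (\<integral>\<^sup>+t. ennreal (gauss_pdf \<mu> \<sigma> t) \<partial>lborel) = 1"
  by (simp add: gauss_pdf_eq_normal_density nn_integral_eq_integral)

lemma awgn_density_nonneg: "\<sigma> > 0 \<Longrightarrow> awgn_density \<sigma> m x y \<ge> 0"
  unfolding awgn_density_def by (simp add: gauss_pdf_nonneg prod_nonneg)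

lemma borel_measurable_awgn_density[measurable]:
  "awgn_density \<sigma> m x \<in> borel_measurable (PiM_lborel m)"
  unfolding awgn_density_def by measurable

lemma nn_integral_awgn_density:
  assumes "\<sigma> > 0"
  shows "(\<integral>\<^sup>+y. ennreal (awgn_density \<sigma> m x y) \<partial>PiM_lborel m) = 1"
proof -
  interpret product_sigma_finite "\<lambda>_. lborel" by standard
  have "(\<integral>\<^sup>+y. ennreal (awgn_density \<sigma> m x y) \<partial>PiM_lborel m)
     = (\<integral>\<^sup>+y. (\<Prod>i<m. ennreal (gauss_pdf (x i) \<sigma> (y i))) \<partial>PiM_lborel m)"
    unfolding awgn_density_def using assms
    by (intro nn_integral_cong) (simp add: prod_ennreal gauss_pdf_nonneg)
  also have "\<dots> = (\<Prod>i<m. \<integral>\<^sup>+t. ennreal (gauss_pdf (x i) \<sigma> t) \<partial>lborel)"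
    by (rule product_nn_integral_prod) auto
  also have "\<dots> = 1"
    using assms by (simp add: nn_integral_gauss_pdf)
  finally show ?thesis .
qed

lemma integrable_awgn_density: "\<sigma> > 0 \<Longrightarrow> integrable (PiM_lborel m) (awgn_density \<sigma> m x)"
  by (rule integrableI_nonneg) (auto simp: awgn_density_nonneg nn_integral_awgn_density)

lemma integral_awgn_density: "\<sigma> > 0 \<Longrightarrow> (\<integral>y. awgn_density \<sigma> m x y \<partial>PiM_lborel m) = 1"
  by (subst integral_eq_nn_integral) (auto simp: awgn_density_nonneg nn_integral_awgn_density)

lemma awgn_density_Suc:
  "awgn_density \<sigma> (Suc m) x y = awgn_density \<sigma> m x y * gauss_pdf (x m) \<sigma> (y m)"
  unfolding awgn_density_def by simp

lemma awgn_density_fun_upd: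
  "awgn_density \<sigma> m (x(m := a)) (y(m := t)) = awgn_density \<sigma> m x y"
  unfolding awgn_density_def by (intro prod.cong) auto

lemma measurable_ml_decoder[measurable]:
  "ml_decoder \<sigma> m M c \<in> measurable (PiM_lborel m) (count_space UNIV)"
  unfolding ml_decoder_def[abs_def]
  by (intro measurable_Least pred_intros_conj1' pred_intros_countable pred_intros_imp')
    (simp add: pred_def)

lemma ml_decoder_spec:
  assumes "M \<ge> 1"
  shows "ml_decoder \<sigma> m M c y < M \<and>
    (\<forall>u<M. awgn_density \<sigma> m (c u) y \<le> awgn_density \<sigma> m (c (ml_decoder \<sigma> m M c y)) y)"
proof -
  let ?w = "\<lambda>u. awgn_density \<sigma> m (c u) y"
  have "Max (?w ` {..<M}) \<in> ?w ` {..<M}"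
    using assms by (intro Max_in) (auto simp: lessThan_empty_iff)
  then obtain v where "v < M" "?w v = Max (?w ` {..<M})"
    by auto
  then have "\<exists>v. v < M \<and> (\<forall>u<M. ?w u \<le> ?w v)"
    by auto
  from LeastI_ex[OF this] show ?thesis
    unfolding ml_decoder_def .
qed

lemma measurable_ml_likelihood[measurable]:
  "(\<lambda>y. awgn_density \<sigma> m (c (ml_decoder \<sigma> m M c y)) y) \<in> borel_measurable (PiM_lborel m)"
  by (rule measurable_compose_countable'[where I=UNIV]) auto

text \<open>\<open>M\<close> times the probability of a correct ML decision.\<close>
definition correct_mass :: "real \<Rightarrow> nat \<Rightarrow> nat \<Rightarrow> (nat \<Rightarrow> nat \<Rightarrow> real) \<Rightarrow> real" where
  "correct_mass \<sigma> m M c = (\<integral>y. awgn_density \<sigma> m (c (ml_decoder \<sigma> m M c y)) y \<partial>PiM_lborel m)"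

lemma error_prob_eq_correct_mass:
  assumes s: "\<sigma> > 0" and M: "M \<ge> 1"
  shows "error_prob \<sigma> m M c = (real M - correct_mass \<sigma> m M c) / real M"
proof -
  let ?D = "ml_decoder \<sigma> m M c"
  let ?w = "\<lambda>v. awgn_density \<sigma> m (c v)"
  let ?hit = "\<lambda>v y. if ?D y = v then ?w v y else 0"
  have integrable_hit: "integrable (PiM_lborel m) (?hit v)" for v
    by (rule Bochner_Integration.integrable_bound[OF integrable_awgn_density[OF s]])
       (auto simp: awgn_density_nonneg[OF s])
  have "(\<integral>y. (if ?D y \<noteq> v then 1 else 0) * ?w v y \<partial>PiM_lborel m)
      = (\<integral>y. ?w v y - ?hit v y \<partial>PiM_lborel m)" for v
    by (intro Bochner_Integration.integral_cong) auto
  also have "\<dots> v = 1 - (\<integral>y. ?hit v y \<partial>PiM_lborel m)" for v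
    using s by (subst Bochner_Integration.integral_diff)
      (auto intro: integrable_hit integrable_awgn_density simp: integral_awgn_density)
  finally have "error_prob \<sigma> m M c = (\<Sum>v<M. 1 - (\<integral>y. ?hit v y \<partial>PiM_lborel m)) / real M"
    unfolding error_prob_def by simp
  moreover have "(\<Sum>v<M. (\<integral>y. ?hit v y \<partial>PiM_lborel m)) = correct_mass \<sigma> m M c"
  proof -
    have "(\<Sum>v<M. (\<integral>y. ?hit v y \<partial>PiM_lborel m)) = (\<integral>y. (\<Sum>v<M. ?hit v y) \<partial>PiM_lborel m)"
      by (rule Bochner_Integration.integral_sum[symmetric]) (rule integrable_hit)
    also have "\<dots> = correct_mass \<sigma> m M c"
      unfolding correct_mass_def using ml_decoder_spec[OF M]
      by (intro Bochner_Integration.integral_cong) (auto simp: sum.delta')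
    finally show ?thesis .
  qed
  ultimately show ?thesis
    by (simp add: sum_subtractf)
qed

lemma error_prob_nonneg: "\<sigma> > 0 \<Longrightarrow> error_prob \<sigma> m M c \<ge> 0"
  unfolding error_prob_def
  by (intro divide_nonneg_nonneg sum_nonneg integral_nonneg_AE AE_I2 mult_nonneg_nonneg)
    (simp_all add: awgn_density_nonneg)

lemma nn_integral_ml_likelihood_le:
  assumes s: "\<sigma> > 0" and M: "M \<ge> 1"
  shows "(\<integral>\<^sup>+y. ennreal (awgn_density \<sigma> m (c (ml_decoder \<sigma> m M c y)) y) \<partial>PiM_lborel m)
    \<le> of_nat M"
proof -
  have "(\<integral>\<^sup>+y. ennreal (awgn_density \<sigma> m (c (ml_decoder \<sigma> m M c y)) y) \<partial>PiM_lborel m)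
      \<le> (\<integral>\<^sup>+y. (\<Sum>v<M. ennreal (awgn_density \<sigma> m (c v) y)) \<partial>PiM_lborel m)"
  proof (intro nn_integral_mono)
    fix y
    have "ml_decoder \<sigma> m M c y \<in> {..<M}"
      using ml_decoder_spec[OF M] by simp
    then show "ennreal (awgn_density \<sigma> m (c (ml_decoder \<sigma> m M c y)) y)
        \<le> (\<Sum>v<M. ennreal (awgn_density \<sigma> m (c v) y))"
      by (rule member_le_sum) simp_all
  qed
  also have "\<dots> = (\<Sum>v<M. (\<integral>\<^sup>+y. ennreal (awgn_density \<sigma> m (c v) y) \<partial>PiM_lborel m))"
    by (rule nn_integral_sum) auto
  also have "\<dots> = of_nat M"
    by (simp add: nn_integral_awgn_density[OF s])
  finally show ?thesis .
qed

lemma ml_likelihood_le_nn_integral_extension: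
  assumes s: "\<sigma> > 0" and M: "M \<ge> 1" and c': "c' = (\<lambda>v. (c v)(n := a v))"
  shows "ennreal (awgn_density \<sigma> n (c (ml_decoder \<sigma> n M c y)) y)
    \<le> (\<integral>\<^sup>+t. ennreal (awgn_density \<sigma> (Suc n) (c' (ml_decoder \<sigma> (Suc n) M c' (y(n := t))))
             (y(n := t))) \<partial>lborel)"
proof -
  let ?g = "awgn_density \<sigma> n (c (ml_decoder \<sigma> n M c y)) y"
  let ?h = "\<lambda>z. awgn_density \<sigma> (Suc n) (c' (ml_decoder \<sigma> (Suc n) M c' z)) z"
  let ?v = "ml_decoder \<sigma> n M c y"
  have "ennreal ?g = (\<integral>\<^sup>+t. ennreal ?g * ennreal (gauss_pdf (a ?v) \<sigma> t) \<partial>lborel)"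
    by (subst nn_integral_cmult) (auto simp: nn_integral_gauss_pdf[OF s])
  also have "\<dots> \<le> (\<integral>\<^sup>+t. ennreal (?h (y(n := t))) \<partial>lborel)"
  proof (intro nn_integral_mono)
    fix t
    have "?g * gauss_pdf (a ?v) \<sigma> t = awgn_density \<sigma> (Suc n) (c' ?v) (y(n := t))"
      by (simp add: c' awgn_density_Suc awgn_density_fun_upd)
    also have "\<dots> \<le> ?h (y(n := t))"
      using ml_decoder_spec[OF M, of \<sigma> "Suc n" c' "y(n := t)"] ml_decoder_spec[OF M, of \<sigma> n c y]
      by auto
    finally show "ennreal ?g * ennreal (gauss_pdf (a ?v) \<sigma> t) \<le> ennreal (?h (y(n := t)))"
      by (simp add: ennreal_mult'[symmetric] awgn_density_nonneg[OF s] ennreal_leI)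
  qed
  finally show ?thesis .
qed

lemma correct_mass_le_extension:
  assumes s: "\<sigma> > 0" and M: "M \<ge> 1"
  shows "correct_mass \<sigma> n M c \<le> correct_mass \<sigma> (Suc n) M (\<lambda>v. (c v)(n := a v))"
proof -
  interpret product_sigma_finite "\<lambda>_. lborel" by standard
  let ?c' = "\<lambda>v. (c v)(n := a v)"
  let ?g = "\<lambda>y. awgn_density \<sigma> n (c (ml_decoder \<sigma> n M c y)) y"
  let ?h = "\<lambda>z. awgn_density \<sigma> (Suc n) (?c' (ml_decoder \<sigma> (Suc n) M ?c' z)) z"
  have PiM_Suc: "PiM_lborel (Suc n) = PiM (insert n {..<n}) (\<lambda>_. lborel)"
    by (simp add: lessThan_Suc)
  have h_measurable: "(\<lambda>z. ennreal (?h z)) \<in> borel_measurable (PiM (insert n {..<n}) (\<lambda>_. lborel))"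
    unfolding PiM_Suc[symmetric] by measurable
  have "(\<integral>\<^sup>+y. ennreal (?g y) \<partial>PiM_lborel n)
      \<le> (\<integral>\<^sup>+y. (\<integral>\<^sup>+t. ennreal (?h (y(n := t))) \<partial>lborel) \<partial>PiM_lborel n)"
    by (intro nn_integral_mono ml_likelihood_le_nn_integral_extension[OF s M refl])
  also have "\<dots> = (\<integral>\<^sup>+z. ennreal (?h z) \<partial>PiM_lborel (Suc n))"
    unfolding PiM_Suc by (rule product_nn_integral_insert[symmetric]) (auto intro: h_measurable)
  finally have le: "(\<integral>\<^sup>+y. ennreal (?g y) \<partial>PiM_lborel n) \<le> (\<integral>\<^sup>+z. ennreal (?h z) \<partial>PiM_lborel (Suc n))" .
  have "(\<integral>\<^sup>+z. ennreal (?h z) \<partial>PiM_lborel (Suc n)) < \<infinity>"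
    using nn_integral_ml_likelihood_le[OF s M, of "Suc n" ?c'] of_nat_less_top[of M]
    by (simp add: le_less_trans)
  with le show ?thesis
    unfolding correct_mass_def
    by (simp add: integral_eq_nn_integral awgn_density_nonneg[OF s] enn2real_mono)
qed

lemma error_prob_extension_le:
  assumes "\<sigma> > 0" and "M \<ge> 1"
  shows "error_prob \<sigma> (Suc n) M (\<lambda>v. (c v)(n := a v)) \<le> error_prob \<sigma> n M c"
  using correct_mass_le_extension[OF assms, of n c a]
  by (simp add: error_prob_eq_correct_mass[OF assms] divide_right_mono)

lemma padded_code_in_equal_power_codes:
  assumes "c \<in> max_power_codes n M \<Upsilon>"
  shows "(\<lambda>v. (c v)(n := sqrt (real n * \<Upsilon> - sqnorm n (c v))))
    \<in> equal_power_codes (Suc n) M (real n * \<Upsilon> / real (Suc n))"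
proof -
  have "sqnorm (Suc n) ((c v)(n := sqrt (real n * \<Upsilon> - sqnorm n (c v)))) = real n * \<Upsilon>"
    if "v < M" for v
  proof -
    have "sqnorm n (c v) \<le> real n * \<Upsilon>"
      using assms that by (simp add: max_power_codes_def)
    moreover have "sqnorm n ((c v)(n := b)) = sqnorm n (c v)" for b
      unfolding sqnorm_def by (intro sum.cong) auto
    ultimately show ?thesis
      by (simp add: sqnorm_def lessThan_Suc)
  qed
  then show ?thesis
    by (simp add: equal_power_codes_def)
qed

lemma eps_e_le_error_prob:
  "\<sigma> > 0 \<Longrightarrow> c \<in> equal_power_codes m M \<Upsilon> \<Longrightarrow> eps_e \<sigma> m M \<Upsilon> \<le> error_prob \<sigma> m M c"
  unfolding eps_e_def
  by (rule cINF_lower) (auto intro: bdd_belowI[where m=0] error_prob_nonneg)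

theorem mainTheorem1:
  fixes \<sigma> \<Upsilon> :: real and n M :: nat
  assumes "\<sigma> > 0" and "n \<ge> 1" and "M \<ge> 2" and "\<Upsilon> > 0"
  shows "eps_m \<sigma> n M \<Upsilon> \<ge> eps_e \<sigma> (n + 1) M (real n * \<Upsilon> / real (n + 1))"
proof -
  have "(\<lambda>_ _. 0) \<in> max_power_codes n M \<Upsilon>"
    using assms by (simp add: max_power_codes_def sqnorm_def)
  then have "max_power_codes n M \<Upsilon> \<noteq> {}"
    by blast
  then show ?thesis
    unfolding eps_m_def Suc_eq_plus1[symmetric]
  proof (rule cINF_greatest)
    fix c assume "c \<in> max_power_codes n M \<Upsilon>"
    then have "eps_e \<sigma> (Suc n) M (real n * \<Upsilon> / real (Suc n))
        \<le> error_prob \<sigma> (Suc n) M (\<lambda>v. (c v)(n := sqrt (real n * \<Upsilon> - sqnorm n (c v))))"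
      using assms by (intro eps_e_le_error_prob padded_code_in_equal_power_codes)
    also have "\<dots> \<le> error_prob \<sigma> n M c"
      using assms by (intro error_prob_extension_le) auto
    finally show "eps_e \<sigma> (Suc n) M (real n * \<Upsilon> / real (Suc n)) \<le> error_prob \<sigma> n M c" .
  qed
qed

end
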